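(* For $D\in\mathbb N$ let $H_D:=\{\sum_{n=-D}^Da_ne_n:\ a_n\in\mathbb C\}$. Let $\gamma,\omega\in\mathbb R$, $\beta\in\mathbb C$. Then every $H_D$ is invariant for both equations $$\partial_t\widehat w=(1+i\gamma)\partial_x^2\widehat w+\beta\widehat w-(1+i\omega)N(\widehat w)\quad\text{and}\quad\partial_t\widehat w=\partial_x^2\widehat w+\beta\widehat w-(1+i\omega)M(\widehat w),$$ and their global attractors satisfy $\widehat{\mathcal A}_{GL1}\subset H_D$, $\widehat{\mathcal A}_{GL2}\subset H_D$ provided $D=D(\beta,\omega)$ is large enough. In particular, for the second equation one may take $D=[\sqrt{\operatorname{Re}\beta}]+1$ (where $[z]$ is the integer part), and its global attractor is trivial if $\operatorname{Re}\beta<0$.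
   Context: $e_n=e^{inx}$, $w=\sum_nw_ne_n$; $H=L^2_{per}(-\pi,\pi)$ complex-valued, $\|w\|_H^2=\sum|w_n|^2$; $[w,v]=\sum_nw_nv_{-n}$. $N(w)=\big(2w_0(\|w\|^2_H-|w_0|^2)+\bar w_0[w,w]\big)e_0+\sum_{n\ne0}\big(w_n(2\|w\|^2_H-|w_n|^2-2|w_{-n}|^2)+\bar w_{-n}[w,w]\big)e_n$, $M(w)=\sum_nw_n(2\|w\|_H^2-|w_n|^2)e_n$. $\widehat{\mathcal A}_{GL1}$, $\widehat{\mathcal A}_{GL2}$ denote the global attractors in $H$ of the first and second equation respectively. *)

theory Defs
  imports "HOL-Analysis.Analysis"
begin

text \<open>Elements of H = L^2_per(-pi,pi) are represented by their Fourier
coefficient sequences w :: int \<Rightarrow> complex (w n is the coefficient of e_n).\<close>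

type_synonym fseq = "int \<Rightarrow> complex"

definition inH :: "fseq \<Rightarrow> bool" where
  "inH w \<longleftrightarrow> (\<lambda>n. (norm (w n))\<^sup>2) summable_on UNIV"

definition Hnorm2 :: "fseq \<Rightarrow> real" where
  "Hnorm2 w = (\<Sum>\<^sub>\<infinity>n. (norm (w n))\<^sup>2)"

definition Hdist :: "fseq \<Rightarrow> fseq \<Rightarrow> real" where
  "Hdist w v = sqrt (Hnorm2 (\<lambda>n. w n - v n))"

definition bracket :: "fseq \<Rightarrow> fseq \<Rightarrow> complex" where
  "bracket w v = (\<Sum>\<^sub>\<infinity>n. w n * v (- n))"

definition Nop :: "fseq \<Rightarrow> fseq" where
  "Nop w n =
     (if n = 0 then
        2 * w 0 * complex_of_real (Hnorm2 w - (norm (w 0))\<^sup>2) + cnj (w 0) * bracket w w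
      else
        w n * complex_of_real (2 * Hnorm2 w - (norm (w n))\<^sup>2 - 2 * (norm (w (- n)))\<^sup>2)
        + cnj (w (- n)) * bracket w w)"

definition Mop :: "fseq \<Rightarrow> fseq" where
  "Mop w n = w n * complex_of_real (2 * Hnorm2 w - (norm (w n))\<^sup>2)"

text \<open>Fourier form of the right-hand sides (\<partial>_x^2 e_n = -n^2 e_n).\<close>

definition rhs_GL1 :: "real \<Rightarrow> complex \<Rightarrow> real \<Rightarrow> fseq \<Rightarrow> fseq" where
  "rhs_GL1 \<gamma> \<beta> \<omega> w n =
     - (1 + \<i> * complex_of_real \<gamma>) * of_int (n\<^sup>2) * w n + \<beta> * w n
     - (1 + \<i> * complex_of_real \<omega>) * Nop w n"

definition rhs_GL2 :: "complex \<Rightarrow> real \<Rightarrow> fseq \<Rightarrow> fseq" where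
  "rhs_GL2 \<beta> \<omega> w n =
     - of_int (n\<^sup>2) * w n + \<beta> * w n - (1 + \<i> * complex_of_real \<omega>) * Mop w n"

definition is_solution :: "(fseq \<Rightarrow> fseq) \<Rightarrow> (real \<Rightarrow> fseq) \<Rightarrow> bool" where
  "is_solution (F::fseq \<Rightarrow> fseq) (u::real \<Rightarrow> fseq) \<longleftrightarrow>
     (\<forall>t\<ge>0. inH (u t)) \<and>
     (\<forall>t\<ge>0. ((\<lambda>s. Hdist (u s) (u t)) \<longlongrightarrow> 0) (at t within {0..})) \<and>
     (\<forall>t>0. \<forall>n. ((\<lambda>s::real. (u s n :: complex)) has_vector_derivative F (u t) n) (at t))"

definition H_D :: "nat \<Rightarrow> fseq set" where
  "H_D D = {w. inH w \<and> (\<forall>n. \<bar>n\<bar> > int D \<longrightarrow> w n = 0)}"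

definition Hbounded :: "fseq set \<Rightarrow> bool" where
  "Hbounded B \<longleftrightarrow> B \<subseteq> {w. inH w} \<and> (\<exists>R. \<forall>w\<in>B. Hnorm2 w \<le> R)"

definition Hcompact :: "fseq set \<Rightarrow> bool" where
  "Hcompact A \<longleftrightarrow> A \<subseteq> {w. inH w} \<and>
     (\<forall>x::nat \<Rightarrow> fseq. (\<forall>k. x k \<in> A) \<longrightarrow>
        (\<exists>(r::nat \<Rightarrow> nat) a. strict_mono r \<and> a \<in> A \<and> (\<lambda>k. Hdist (x (r k)) a) \<longlonglongrightarrow> 0))"

definition is_global_attractor :: "(fseq \<Rightarrow> fseq) \<Rightarrow> fseq set \<Rightarrow> bool" where
  "is_global_attractor F A \<longleftrightarrow>
     Hcompact A \<and>
     (\<forall>t\<ge>0. A = {u t | u. is_solution F u \<and> u 0 \<in> A}) \<and>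
     (\<forall>B. Hbounded B \<longrightarrow> (\<forall>\<epsilon>>0. \<exists>T. \<forall>t\<ge>T. \<forall>u.
        is_solution F u \<and> u 0 \<in> B \<longrightarrow> (\<exists>a\<in>A. Hdist (u t) a < \<epsilon>)))"

end

theory Submission
  imports Defs
begin

text \<open>
The squared moduli of the Fourier coefficients of a solution satisfy linear differential
inequalities. For the second equation every mode decouples:
\<open>d/dt |w\<^sub>n|\<^sup>2 \<le> 2 (Re \<beta> - n\<^sup>2) |w\<^sub>n|\<^sup>2\<close>. For the first equation the pair of modes
\<open>\<plusminus>n\<close> satisfies
\<open>d/dt (|w\<^sub>n|\<^sup>2 + |w\<^sub>-\<^sub>n|\<^sup>2) \<le> 2 (Re \<beta> - n\<^sup>2 + (1 + |\<omega>|) \<parallel>w\<parallel>\<^sup>2) (|w\<^sub>n|\<^sup>2 + |w\<^sub>-\<^sub>n|\<^sup>2)\<close>.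
By Gronwall's inequality, modes that vanish initially stay zero, so \<open>H\<^sub>D\<close> is invariant.

Every point of a global attractor is reached, after any time \<open>t\<close>, by a solution starting in
the (compact, hence bounded) attractor, so a mode that decays exponentially along all
solutions vanishes on the attractor. For the second equation this holds for every \<open>n\<close> with
\<open>n\<^sup>2 > Re \<beta>\<close>. For the first equation one also needs a bound on \<open>\<parallel>w\<parallel>\<^sup>2\<close> that does not
depend on the size of the attractor: up to an error controlled by the tail, the nonlinearity
dissipates at least \<open>(\<Sum>\<^sub>|\<^sub>n\<^sub>|\<^sub>\<le>\<^sub>m |w\<^sub>n|\<^sup>2)\<^sup>2 / 2\<close> from every symmetric truncation of the
energy, and compactness makes the tails uniformly small, so every truncated energy drops
below \<open>2 |Re \<beta>| + 2\<close> after a time depending only on the attractor.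
\<close>

abbreviation coeff_sq :: "fseq \<Rightarrow> int \<Rightarrow> real" where
  "coeff_sq w n \<equiv> (cmod (w n))\<^sup>2"

lemma inH_zero: "inH (\<lambda>n. 0)"
  unfolding inH_def by simp

lemma inH_diff:
  assumes "inH w" "inH v" shows "inH (\<lambda>n. w n - v n)"
proof -
  have s: "(\<lambda>n. 2 * coeff_sq w n + 2 * coeff_sq v n) summable_on UNIV"
    using assms unfolding inH_def by (intro summable_on_add summable_on_cmult_right)
  have "(cmod (w n - v n))\<^sup>2 \<le> 2 * coeff_sq w n + 2 * coeff_sq v n" for n
  proof -
    have "(cmod (w n - v n))\<^sup>2 \<le> (cmod (w n) + cmod (v n))\<^sup>2"
      by (simp add: power_mono norm_triangle_ineq4)
    also have "\<dots> \<le> 2 * coeff_sq w n + 2 * coeff_sq v n"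
      by (smt (verit) power2_sum sum_squares_bound)
    finally show ?thesis .
  qed
  thus ?thesis unfolding inH_def
    by (intro summable_on_comparison_test[OF s]) auto
qed

lemma inH_summable_on: "inH w \<Longrightarrow> coeff_sq w summable_on A"
  unfolding inH_def by (rule summable_on_subset_banach) auto

lemma inH_reflect_summable_on: "inH w \<Longrightarrow> (\<lambda>n. coeff_sq w (-n)) summable_on A"
  using inH_summable_on[of w "uminus ` A"] by (subst (asm) summable_on_reindex) (auto simp: o_def)

lemma Hnorm2_nonneg: "Hnorm2 w \<ge> 0"
  unfolding Hnorm2_def by (rule infsum_nonneg) simp

lemma Hnorm2_zero: "Hnorm2 (\<lambda>n. 0) = 0"
  unfolding Hnorm2_def by simp

lemma sum_coeff_sq_le_Hnorm2:
  assumes "inH w" "finite F" shows "sum (coeff_sq w) F \<le> Hnorm2 w"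
proof -
  have "sum (coeff_sq w) F = infsum (coeff_sq w) F" using assms(2) by simp
  also have "\<dots> \<le> Hnorm2 w"
    unfolding Hnorm2_def using assms inH_summable_on by (intro infsum_mono2) auto
  finally show ?thesis .
qed

lemma coeff_sq_le_Hnorm2: "inH w \<Longrightarrow> coeff_sq w n \<le> Hnorm2 w"
  using sum_coeff_sq_le_Hnorm2[of w "{n}"] by simp

lemma coeff_sq_pair_le_Hnorm2:
  "inH w \<Longrightarrow> n \<noteq> 0 \<Longrightarrow> coeff_sq w n + coeff_sq w (-n) \<le> Hnorm2 w"
  using sum_coeff_sq_le_Hnorm2[of w "{n, -n}"] by simp

lemma Hnorm2_le_finite_sums:
  assumes "inH w" "\<And>F. finite F \<Longrightarrow> sum (coeff_sq w) F \<le> c" shows "Hnorm2 w \<le> c"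
  unfolding Hnorm2_def using assms unfolding inH_def by (intro infsum_le_finite_sums) auto

lemma sqrt_infsum_coeff_sq_triangle:
  assumes "inH w" "inH v"
  shows "sqrt (infsum (coeff_sq w) B)
    \<le> sqrt (infsum (coeff_sq v) B) + sqrt (infsum (\<lambda>n. (cmod (w n - v n))\<^sup>2) B)"
proof -
  let ?a = "sqrt (infsum (coeff_sq v) B)" and ?d = "sqrt (infsum (\<lambda>n. (cmod (w n - v n))\<^sup>2) B)"
  have L2_le: "L2_set (\<lambda>n. cmod (z n)) F \<le> sqrt (infsum (coeff_sq z) B)"
    if "inH z" "finite F" "F \<subseteq> B" for z F
  proof -
    have "sum (coeff_sq z) F \<le> infsum (coeff_sq z) B"
      using that inH_summable_on[of z] infsum_mono2[of "coeff_sq z" F B] by simp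
    thus ?thesis unfolding L2_set_def by (rule real_sqrt_le_mono)
  qed
  have "infsum (coeff_sq w) B \<le> (?a + ?d)\<^sup>2"
  proof (rule infsum_le_finite_sums[OF inH_summable_on[OF assms(1)]])
    fix F assume F: "finite F" "F \<subseteq> B"
    have "L2_set (\<lambda>n. cmod (w n)) F \<le> L2_set (\<lambda>n. cmod (v n) + cmod (w n - v n)) F"
      by (rule L2_set_mono) (auto simp: norm_triangle_sub)
    also have "\<dots> \<le> L2_set (\<lambda>n. cmod (v n)) F + L2_set (\<lambda>n. cmod (w n - v n)) F"
      by (rule L2_set_triangle_ineq)
    also have "\<dots> \<le> ?a + ?d"
      using L2_le[OF assms(2) F] L2_le[OF inH_diff[OF assms] F] by simp
    finally have "sqrt (sum (coeff_sq w) F) \<le> ?a + ?d" unfolding L2_set_def by simp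
    thus "sum (coeff_sq w) F \<le> (?a + ?d)\<^sup>2" by (rule sqrt_le_D)
  qed
  moreover have "?a + ?d \<ge> 0" by (intro add_nonneg_nonneg real_sqrt_ge_zero infsum_nonneg) auto
  ultimately show ?thesis by (intro real_le_lsqrt) auto
qed

lemma sqrt_Hnorm2_triangle:
  "inH w \<Longrightarrow> inH v \<Longrightarrow> sqrt (Hnorm2 w) \<le> sqrt (Hnorm2 v) + Hdist w v"
  using sqrt_infsum_coeff_sq_triangle[of w v UNIV] unfolding Hnorm2_def Hdist_def by simp

lemma Hdist_commute: "Hdist w v = Hdist v w"
  unfolding Hdist_def Hnorm2_def by (simp add: norm_minus_commute)

lemma norm_coeff_diff_le_Hdist:
  assumes "inH w" "inH v" shows "cmod (w n - v n) \<le> Hdist w v"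
proof -
  have "(cmod (w n - v n))\<^sup>2 \<le> Hnorm2 (\<lambda>n. w n - v n)"
    using coeff_sq_le_Hnorm2[OF inH_diff[OF assms]] by simp
  thus ?thesis unfolding Hdist_def by (simp add: real_le_rsqrt)
qed

definition neg_closed :: "int set \<Rightarrow> bool" where
  "neg_closed F \<longleftrightarrow> (\<forall>n\<in>F. -n \<in> F)"

lemma neg_closed_image_uminus: "neg_closed F \<Longrightarrow> uminus ` F = F"
  unfolding neg_closed_def by (force simp: image_iff)

lemma neg_closed_Compl: "neg_closed F \<Longrightarrow> neg_closed (- F)"
  unfolding neg_closed_def by force

lemma neg_closed_UNIV: "neg_closed UNIV"
  unfolding neg_closed_def by simp

lemma sum_reflect: "neg_closed G \<Longrightarrow> (\<Sum>n\<in>G. f (-n)) = sum f G"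
  using sum.reindex[of uminus G f] neg_closed_image_uminus[of G] by (simp add: o_def)

lemma infsum_reflect: "neg_closed A \<Longrightarrow> (\<Sum>\<^sub>\<infinity>n\<in>A. f (-n)) = infsum f A"
  using infsum_reindex[of uminus A f] neg_closed_image_uminus[of A] by (simp add: o_def)

lemma norm_mult_reflect_le: "cmod (w n * w (-n)) \<le> (1/2) * (coeff_sq w n + coeff_sq w (-n))"
  using sum_squares_bound[of "cmod (w n)" "cmod (w (-n))"] by (simp add: norm_mult)

lemma reflect_products_abs_summable_on:
  assumes "inH w" shows "(\<lambda>n. cmod (w n * w (-n))) summable_on A"
proof (rule summable_on_comparison_test)
  show "(\<lambda>n. (1/2) * (coeff_sq w n + coeff_sq w (-n))) summable_on A"
    using assms
    by (intro summable_on_cmult_right summable_on_add inH_summable_on inH_reflect_summable_on)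
qed (use norm_mult_reflect_le[of w] in auto)

lemma norm_infsum_reflect_products_le:
  assumes w: "inH w" and A: "neg_closed A"
  shows "cmod (\<Sum>\<^sub>\<infinity>n\<in>A. w n * w (-n)) \<le> infsum (coeff_sq w) A"
proof -
  have s1: "coeff_sq w summable_on A" and s2: "(\<lambda>n. coeff_sq w (-n)) summable_on A"
    using w by (auto intro: inH_summable_on inH_reflect_summable_on)
  have "cmod (\<Sum>\<^sub>\<infinity>n\<in>A. w n * w (-n)) \<le> (\<Sum>\<^sub>\<infinity>n\<in>A. cmod (w n * w (-n)))"
    by (rule norm_infsum_bound[OF reflect_products_abs_summable_on[OF w]])
  also have "\<dots> \<le> (\<Sum>\<^sub>\<infinity>n\<in>A. (1/2) * (coeff_sq w n + coeff_sq w (-n)))"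
    using reflect_products_abs_summable_on[OF w] s1 s2
    by (intro infsum_mono summable_on_cmult_right summable_on_add)
      (use norm_mult_reflect_le[of w] in auto)
  also have "\<dots> = (1/2) * (infsum (coeff_sq w) A + (\<Sum>\<^sub>\<infinity>n\<in>A. coeff_sq w (-n)))"
    using s1 s2 by (subst infsum_cmult_right) (simp_all add: infsum_add summable_on_add)
  finally show ?thesis using infsum_reflect[OF A, of "coeff_sq w"] by simp
qed

lemma norm_bracket_le_Hnorm2: "inH w \<Longrightarrow> cmod (bracket w w) \<le> Hnorm2 w"
  using norm_infsum_reflect_products_le[OF _ neg_closed_UNIV] unfolding bracket_def Hnorm2_def
  by simp

lemma norm_bracket_minus_sum_le:
  assumes w: "inH w" and F: "finite F" "neg_closed F"
  shows "cmod (bracket w w - (\<Sum>n\<in>F. w n * w (-n))) \<le> Hnorm2 w - sum (coeff_sq w) F"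
proof -
  have sf: "(\<lambda>n. w n * w (-n)) summable_on UNIV"
    using reflect_products_abs_summable_on[OF w] by (rule abs_summable_summable)
  have "bracket w w - (\<Sum>n\<in>F. w n * w (-n)) = (\<Sum>\<^sub>\<infinity>n\<in>-F. w n * w (-n))"
    unfolding bracket_def using infsum_Diff[OF sf, of F] F(1) by (simp add: Compl_eq_Diff_UNIV)
  moreover have "Hnorm2 w - sum (coeff_sq w) F = infsum (coeff_sq w) (-F)"
    unfolding Hnorm2_def using infsum_Diff[OF w[unfolded inH_def], of F] F(1)
    by (simp add: Compl_eq_Diff_UNIV)
  ultimately show ?thesis
    using norm_infsum_reflect_products_le[OF w neg_closed_Compl[OF F(2)]] by simp
qed

definition modes :: "nat \<Rightarrow> int set" where
  "modes m = {- int m..int m}"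

lemma modes_props: "finite (modes m)" "neg_closed (modes m)" "0 \<in> modes m"
  unfolding modes_def neg_closed_def by auto

lemma modes_mono: "m \<le> m' \<Longrightarrow> modes m \<subseteq> modes m'"
  unfolding modes_def by auto

lemma finite_subset_modes: "finite G \<Longrightarrow> \<exists>m. G \<subseteq> modes m"
proof (induction rule: finite_induct)
  case (insert g G)
  then obtain m where "G \<subseteq> modes m" by blast
  moreover have "modes m \<subseteq> modes (max m (nat \<bar>g\<bar>))" by (rule modes_mono) simp
  moreover have "g \<in> modes (max m (nat \<bar>g\<bar>))" unfolding modes_def by auto
  ultimately have "insert g G \<subseteq> modes (max m (nat \<bar>g\<bar>))" by blast
  thus ?case by blast
qed simp

lemma tail_nonneg: "inH w \<Longrightarrow> Hnorm2 w - sum (coeff_sq w) (modes m) \<ge> 0"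
  using sum_coeff_sq_le_Hnorm2[of w "modes m"] modes_props by simp

lemma tail_antimono:
  "inH w \<Longrightarrow> m \<le> m' \<Longrightarrow> Hnorm2 w - sum (coeff_sq w) (modes m') \<le> Hnorm2 w - sum (coeff_sq w) (modes m)"
  by (intro diff_left_mono sum_mono2 modes_props modes_mono) auto

lemma eventually_tail_le:
  assumes w: "inH w" and e: "\<epsilon> > 0"
  shows "\<exists>M. \<forall>m\<ge>M. Hnorm2 w - sum (coeff_sq w) (modes m) \<le> \<epsilon>"
proof -
  obtain G where G: "finite G" "dist (sum (coeff_sq w) G) (infsum (coeff_sq w) UNIV) \<le> \<epsilon>"
    using infsum_finite_approximation[of "coeff_sq w" UNIV \<epsilon>] w e unfolding inH_def by auto
  obtain M where M: "G \<subseteq> modes M" using finite_subset_modes[OF G(1)] by blast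
  have "Hnorm2 w - sum (coeff_sq w) (modes m) \<le> \<epsilon>" if "m \<ge> M" for m
  proof -
    have "sum (coeff_sq w) G \<le> sum (coeff_sq w) (modes m)"
      using M modes_mono[OF that] modes_props(1) by (intro sum_mono2) auto
    thus ?thesis using G(2) unfolding Hnorm2_def dist_real_def by simp
  qed
  thus ?thesis by blast
qed

lemma sqrt_tail_triangle:
  assumes "inH w" "inH v"
  shows "sqrt (Hnorm2 w - sum (coeff_sq w) (modes m))
    \<le> sqrt (Hnorm2 v - sum (coeff_sq v) (modes m)) + Hdist w v"
proof -
  have tail: "Hnorm2 z - sum (coeff_sq z) (modes m) = infsum (coeff_sq z) (- modes m)"
    if "inH z" for z
    unfolding Hnorm2_def using infsum_Diff[OF that[unfolded inH_def], of "modes m"] modes_props(1)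
    by (simp add: Compl_eq_Diff_UNIV)
  have s: "(\<lambda>n. (cmod (w n - v n))\<^sup>2) summable_on UNIV"
    using inH_diff[OF assms] unfolding inH_def .
  have "infsum (\<lambda>n. (cmod (w n - v n))\<^sup>2) (- modes m) \<le> infsum (\<lambda>n. (cmod (w n - v n))\<^sup>2) UNIV"
    by (intro infsum_mono2 summable_on_subset_banach[OF s]) auto
  hence "sqrt (infsum (\<lambda>n. (cmod (w n - v n))\<^sup>2) (- modes m)) \<le> Hdist w v"
    unfolding Hdist_def Hnorm2_def by simp
  thus ?thesis
    using sqrt_infsum_coeff_sq_triangle[OF assms, of "- modes m"] tail[OF assms(1)] tail[OF assms(2)]
    by simp
qed

lemma Hcompact_inH: "Hcompact A \<Longrightarrow> w \<in> A \<Longrightarrow> inH w"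
  unfolding Hcompact_def by blast

lemma Hcompact_bounded:
  assumes A: "Hcompact A"
  shows "\<exists>R\<ge>0. \<forall>v\<in>A. Hnorm2 v \<le> R"
proof (rule ccontr)
  assume "\<not> ?thesis"
  hence "\<forall>k::nat. \<exists>v\<in>A. Hnorm2 v > real k" by (meson linorder_not_le of_nat_0_le_iff)
  then obtain x where x: "\<And>k. x k \<in> A" "\<And>k. Hnorm2 (x k) > real k" by metis
  obtain r a where r: "strict_mono r" "a \<in> A" "(\<lambda>k. Hdist (x (r k)) a) \<longlonglongrightarrow> 0"
    using A x(1) unfolding Hcompact_def by blast
  obtain N where N: "\<And>k. k \<ge> N \<Longrightarrow> Hdist (x (r k)) a < 1"
    using order_tendstoD(2)[OF r(3), of 1] by (auto simp: eventually_sequentially)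
  define C where "C = (sqrt (Hnorm2 a) + 1)\<^sup>2"
  define k where "k = max N (nat \<lceil>C\<rceil>)"
  have "sqrt (Hnorm2 (x (r k))) \<le> sqrt (Hnorm2 a) + Hdist (x (r k)) a"
    using A x(1) r(2) by (intro sqrt_Hnorm2_triangle Hcompact_inH)
  also have "\<dots> \<le> sqrt (Hnorm2 a) + 1" using N[of k] unfolding k_def by simp
  finally have "Hnorm2 (x (r k)) \<le> C" unfolding C_def by (rule sqrt_le_D)
  moreover have "real (r k) \<ge> real k" using seq_suble[OF r(1), of k] by simp
  moreover have "real k \<ge> C" unfolding k_def by linarith
  ultimately show False using x(2)[of "r k"] by simp
qed

lemma Hcompact_uniform_tail:
  assumes A: "Hcompact A" and d: "\<delta> > 0"
  shows "\<exists>m. \<forall>v\<in>A. Hnorm2 v - sum (coeff_sq v) (modes m) \<le> \<delta>"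
proof (rule ccontr)
  assume "\<not> ?thesis"
  hence "\<forall>m. \<exists>v\<in>A. Hnorm2 v - sum (coeff_sq v) (modes m) > \<delta>" by (meson linorder_not_le)
  then obtain x where x: "\<And>m. x m \<in> A" "\<And>m. Hnorm2 (x m) - sum (coeff_sq (x m)) (modes m) > \<delta>"
    by metis
  obtain r a where r: "strict_mono r" "a \<in> A" "(\<lambda>k. Hdist (x (r k)) a) \<longlonglongrightarrow> 0"
    using A x(1) unfolding Hcompact_def by blast
  define e where "e = sqrt \<delta> / 2"
  have e: "e > 0" unfolding e_def using d by simp
  obtain N where N: "\<And>k. k \<ge> N \<Longrightarrow> Hdist (x (r k)) a < e"
    using order_tendstoD(2)[OF r(3) e] by (auto simp: eventually_sequentially)
  obtain M where M: "\<And>m. m \<ge> M \<Longrightarrow> Hnorm2 a - sum (coeff_sq a) (modes m) \<le> e\<^sup>2"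
    using eventually_tail_le[OF Hcompact_inH[OF A r(2)], of "e\<^sup>2"] e by auto
  define k where "k = max N M"
  have rk: "r k \<ge> M" using seq_suble[OF r(1), of k] unfolding k_def by simp
  have "sqrt (Hnorm2 (x (r k)) - sum (coeff_sq (x (r k))) (modes (r k)))
      \<le> sqrt (Hnorm2 a - sum (coeff_sq a) (modes (r k))) + Hdist (x (r k)) a"
    using A x(1) r(2) by (intro sqrt_tail_triangle Hcompact_inH)
  also have "sqrt (Hnorm2 a - sum (coeff_sq a) (modes (r k))) \<le> e"
    using M[OF rk] e by (simp add: real_le_lsqrt)
  also have "Hdist (x (r k)) a < e" using N unfolding k_def by simp
  finally have "sqrt (Hnorm2 (x (r k)) - sum (coeff_sq (x (r k))) (modes (r k))) < sqrt \<delta>"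
    unfolding e_def by simp
  thus False using x(2)[of "r k"] by simp
qed

lemma gronwall_exp:
  fixes f f' :: "real \<Rightarrow> real"
  assumes "t0 \<le> t1" "continuous_on {t0..t1} f"
    and "\<And>s. t0 < s \<Longrightarrow> s < t1 \<Longrightarrow> (f has_real_derivative f' s) (at s)"
    and "\<And>s. t0 < s \<Longrightarrow> s < t1 \<Longrightarrow> f' s \<le> c * f s"
  shows "f t1 \<le> exp (c * (t1 - t0)) * f t0"
proof -
  define g where "g s = exp (- c * (s - t0)) * f s" for s
  have "g t1 \<le> g t0"
  proof (rule DERIV_nonpos_imp_decreasing_open[OF assms(1)])
    fix s assume s: "t0 < s" "s < t1"
    have "(g has_real_derivative
        exp (- c * (s - t0)) * f' s + (- c) * exp (- c * (s - t0)) * f s) (at s)"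
      unfolding g_def by (rule derivative_eq_intros assms(3)[OF s] refl | simp)+
    moreover have "exp (- c * (s - t0)) * f' s + (- c) * exp (- c * (s - t0)) * f s
        = exp (- c * (s - t0)) * (f' s - c * f s)" by (simp add: algebra_simps)
    moreover have "exp (- c * (s - t0)) * (f' s - c * f s) \<le> 0"
      using assms(4)[OF s] by (simp add: mult_nonneg_nonpos)
    ultimately show "\<exists>y. (g has_real_derivative y) (at s) \<and> y \<le> 0" by auto
  next
    show "continuous_on {t0..t1} g" unfolding g_def using assms(2) by (intro continuous_intros)
  qed
  hence "exp (- (c * (t1 - t0))) * f t1 \<le> f t0" unfolding g_def by simp
  hence "exp (c * (t1 - t0)) * (exp (- (c * (t1 - t0))) * f t1) \<le> exp (c * (t1 - t0)) * f t0"
    by (intro mult_left_mono) auto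
  thus ?thesis by (simp add: exp_minus_inverse mult.assoc[symmetric])
qed

lemma deriv_le_neg_one_imp_descent:
  fixes f f' :: "real \<Rightarrow> real"
  assumes "a \<le> b" "continuous_on {a..b} f"
    and "\<And>s. a < s \<Longrightarrow> s < b \<Longrightarrow> (f has_real_derivative f' s) (at s)"
    and "\<And>s. a < s \<Longrightarrow> s < b \<Longrightarrow> f' s \<le> -1"
  shows "f b + b \<le> f a + a"
proof -
  have "(\<lambda>s. f s + s) b \<le> (\<lambda>s. f s + s) a"
  proof (rule DERIV_nonpos_imp_decreasing_open[OF assms(1)])
    fix s assume s: "a < s" "s < b"
    have "((\<lambda>s. f s + s) has_real_derivative f' s + 1) (at s)"
      using assms(3)[OF s] by (intro derivative_eq_intros) auto
    thus "\<exists>y. ((\<lambda>s. f s + s) has_real_derivative y) (at s) \<and> y \<le> 0"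
      using assms(4)[OF s] by force
  qed (use assms(2) in \<open>intro continuous_intros\<close>)
  thus ?thesis by simp
qed

lemma descent_to_level:
  fixes f f' :: "real \<Rightarrow> real"
  assumes cont: "continuous_on {0..} f"
    and der: "\<And>s. 0 < s \<Longrightarrow> (f has_real_derivative f' s) (at s)"
    and neg: "\<And>s. 0 < s \<Longrightarrow> f s \<ge> L \<Longrightarrow> f' s \<le> -1"
    and t: "t \<ge> 0"
  shows "f t \<le> max L (f 0 - t)"
proof (rule ccontr)
  assume "\<not> ?thesis"
  hence ft: "f t > L" "f t > f 0 - t" by auto
  have descent: "f t + t \<le> f a + a"
    if a: "0 \<le> a" "a \<le> t" and above: "\<And>s. a < s \<Longrightarrow> s < t \<Longrightarrow> f s > L" for a
    using a by (intro deriv_le_neg_one_imp_descent[where f' = f'] continuous_on_subset[OF cont]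
        der neg less_imp_le[OF above]) auto
  define Z where "Z = {s \<in> {0..t}. f s \<le> L}"
  show False
  proof (cases "Z = {}")
    case True
    have "f t + t \<le> f 0 + 0"
      using t True by (intro descent) (auto simp: Z_def not_le[symmetric])
    thus False using ft by simp
  next
    case False
    have "closed Z" unfolding Z_def
      by (intro continuous_on_closed_Collect_le continuous_on_subset[OF cont] continuous_intros) auto
    moreover have bdd: "bdd_above Z" unfolding Z_def by (rule bdd_aboveI[of _ t]) auto
    ultimately have s0: "Sup Z \<in> Z" using False by (intro closed_contains_Sup)
    have "f t + t \<le> f (Sup Z) + Sup Z"
    proof (rule descent)
      show "f s > L" if "Sup Z < s" "s < t" for s
        using cSup_upper[OF _ bdd, of s] that s0 by (force simp: Z_def)
    qed (use s0 in \<open>auto simp: Z_def\<close>)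
    thus False using ft s0 by (auto simp: Z_def)
  qed
qed

lemma nonneg_le_exp_decay_imp_zero:
  fixes x R c :: real
  assumes x: "x \<ge> 0" and c: "c > 0" and h: "\<And>t. t \<ge> 0 \<Longrightarrow> x \<le> exp (- c * t) * R"
  shows "x = 0"
proof -
  have "((\<lambda>t. exp (- c * t) * R) \<longlongrightarrow> 0) at_top"
    using c by (intro tendsto_mult_left_zero filterlim_compose[OF exp_at_bot]
        filterlim_tendsto_neg_mult_at_bot[OF tendsto_const] filterlim_ident) auto
  moreover have "eventually (\<lambda>t. x \<le> exp (- c * t) * R) at_top"
    using h by (auto simp: eventually_at_top_linorder)
  ultimately have "x \<le> 0" by (intro tendsto_lowerbound) auto
  thus ?thesis using x by simp
qed

lemma solution_inH: "is_solution F u \<Longrightarrow> t \<ge> 0 \<Longrightarrow> inH (u t)"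
  unfolding is_solution_def by auto

lemma solution_tendsto_Hdist:
  "is_solution F u \<Longrightarrow> t \<ge> 0 \<Longrightarrow> ((\<lambda>s. Hdist (u s) (u t)) \<longlongrightarrow> 0) (at t within {0..})"
  unfolding is_solution_def by auto

lemma continuous_on_solution_comp_lipschitz:
  fixes g :: "fseq \<Rightarrow> 'a::real_normed_vector"
  assumes sol: "is_solution F u"
    and bound: "\<And>w v. inH w \<Longrightarrow> inH v \<Longrightarrow> norm (g w - g v) \<le> Hdist w v"
  shows "continuous_on {0..} (\<lambda>s. g (u s))"
  unfolding continuous_on_def
proof
  fix t :: real assume t: "t \<in> {0..}"
  have "eventually (\<lambda>s. norm (g (u s) - g (u t)) \<le> Hdist (u s) (u t)) (at t within {0..})"
    unfolding eventually_at_filter using t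
    by (intro always_eventually allI impI bound solution_inH[OF sol]) auto
  from Lim_null_comparison[OF this solution_tendsto_Hdist[OF sol]]
  show "((\<lambda>s. g (u s)) \<longlongrightarrow> g (u t)) (at t within {0..})"
    unfolding Lim_null[of _ "g (u t)"] using t by simp
qed

lemma continuous_on_solution_coeff:
  "is_solution F u \<Longrightarrow> continuous_on {0..} (\<lambda>s. u s n)"
  using continuous_on_solution_comp_lipschitz[of F u "\<lambda>w. w n"] norm_coeff_diff_le_Hdist by blast

lemma continuous_on_solution_coeff_sq:
  "is_solution F u \<Longrightarrow> continuous_on {0..} (\<lambda>s. coeff_sq (u s) n)"
  by (intro continuous_intros continuous_on_solution_coeff)

lemma continuous_on_solution_sqrt_Hnorm2:
  assumes "is_solution F u" shows "continuous_on {0..} (\<lambda>s. sqrt (Hnorm2 (u s)))"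
proof (rule continuous_on_solution_comp_lipschitz[OF assms])
  fix w v assume "inH w" "inH v"
  thus "norm (sqrt (Hnorm2 w) - sqrt (Hnorm2 v)) \<le> Hdist w v"
    using sqrt_Hnorm2_triangle[of w v] sqrt_Hnorm2_triangle[of v w] Hdist_commute[of w v] by auto
qed

lemma solution_Hnorm2_bounded:
  assumes sol: "is_solution F u"
  obtains M where "M \<ge> 0" "\<And>s. s \<in> {0..t} \<Longrightarrow> Hnorm2 (u s) \<le> M"
proof -
  have "compact ((\<lambda>s. sqrt (Hnorm2 (u s))) ` {0..t})"
    by (intro compact_continuous_image
        continuous_on_subset[OF continuous_on_solution_sqrt_Hnorm2[OF sol]]) auto
  then obtain B where B: "\<And>s. s \<in> {0..t} \<Longrightarrow> norm (sqrt (Hnorm2 (u s))) \<le> B"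
    unfolding compact_eq_bounded_closed bounded_iff by blast
  have "Hnorm2 (u s) \<le> B\<^sup>2" if "s \<in> {0..t}" for s
    using B[OF that] Hnorm2_nonneg[of "u s"] by (simp add: sqrt_le_D)
  thus thesis by (intro that[of "B\<^sup>2"]) auto
qed

lemma has_real_derivative_coeff_sq:
  assumes "is_solution F u" "t > 0"
  shows "((\<lambda>s. coeff_sq (u s) n) has_real_derivative 2 * Re (cnj (u t n) * F (u t) n)) (at t)"
proof -
  have d: "((\<lambda>s. u s n) has_vector_derivative F (u t) n) (at t)"
    using assms unfolding is_solution_def by auto
  have "((\<lambda>s. (Re (u s n))\<^sup>2 + (Im (u s n))\<^sup>2) has_real_derivative
         2 * Re (u t n) * Re (F (u t) n) + 2 * Im (u t n) * Im (F (u t) n)) (at t)"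
    by (rule derivative_eq_intros has_field_derivative_Re[OF d] has_field_derivative_Im[OF d] refl
        | simp)+
  thus ?thesis by (simp add: cmod_power2 algebra_simps)
qed

lemma abs_Re_one_plus_i_mult_le:
  "\<bar>Re ((1 + \<i> * complex_of_real \<omega>) * z)\<bar> \<le> (1 + \<bar>\<omega>\<bar>) * cmod z"
proof -
  have "\<bar>Re z - \<omega> * Im z\<bar> \<le> \<bar>Re z\<bar> + \<bar>\<omega>\<bar> * \<bar>Im z\<bar>"
    using abs_triangle_ineq4[of "Re z" "\<omega> * Im z"] by (simp add: abs_mult)
  also have "\<dots> \<le> cmod z + \<bar>\<omega>\<bar> * cmod z"
    by (intro add_mono mult_left_mono abs_Re_le_cmod abs_Im_le_cmod) auto
  finally show ?thesis by (simp add: algebra_simps)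
qed

lemma cnj_mult_self: "cnj z * z = complex_of_real ((cmod z)\<^sup>2)"
  by (metis complex_norm_square mult.commute)

lemma Re_cnj_mult_mult: "Re (cnj z * (z * a)) = (cmod z)\<^sup>2 * Re a"
  unfolding cmod_power2 by (simp add: algebra_simps power2_eq_square)

lemma Re_cnj_rhs_GL2_le:
  assumes "inH w"
  shows "Re (cnj (w n) * rhs_GL2 \<beta> \<omega> w n) \<le> (Re \<beta> - of_int (n\<^sup>2)) * coeff_sq w n"
proof -
  define r where "r = 2 * Hnorm2 w - coeff_sq w n"
  have r: "r \<ge> 0"
    using coeff_sq_le_Hnorm2[OF assms, of n] Hnorm2_nonneg[of w] unfolding r_def by simp
  have "rhs_GL2 \<beta> \<omega> w n
      = w n * (- of_int (n\<^sup>2) + \<beta> - (1 + \<i> * complex_of_real \<omega>) * complex_of_real r)"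
    unfolding rhs_GL2_def Mop_def r_def by (simp add: algebra_simps)
  hence "Re (cnj (w n) * rhs_GL2 \<beta> \<omega> w n) = coeff_sq w n
      * Re (- of_int (n\<^sup>2) + \<beta> - (1 + \<i> * complex_of_real \<omega>) * complex_of_real r)"
    by (simp only: Re_cnj_mult_mult)
  also have "\<dots> = coeff_sq w n * (- of_int (n\<^sup>2) + Re \<beta> - r)" by simp
  also have "\<dots> \<le> (Re \<beta> - of_int (n\<^sup>2)) * coeff_sq w n" using r by (simp add: algebra_simps)
  finally show ?thesis .
qed

text \<open>The factor of \<open>w\<^sub>n\<close> in \<open>N(w)\<^sub>n\<close>; the remaining term is \<open>conj(w\<^sub>-\<^sub>n) [w, w]\<close>
  (for \<open>n = 0\<close> also, since \<open>w\<^sub>-\<^sub>0 = w\<^sub>0\<close>).\<close>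

definition Nop_diag :: "fseq \<Rightarrow> int \<Rightarrow> real" where
  "Nop_diag w n = (if n = 0 then 2 * (Hnorm2 w - coeff_sq w 0)
     else 2 * Hnorm2 w - coeff_sq w n - 2 * coeff_sq w (-n))"

lemma cnj_mult_Nop:
  "cnj (w n) * Nop w n
    = complex_of_real (coeff_sq w n * Nop_diag w n) + cnj (w n * w (-n)) * bracket w w"
proof -
  have "Nop w n = w n * complex_of_real (Nop_diag w n) + cnj (w (-n)) * bracket w w"
    unfolding Nop_def Nop_diag_def by (simp add: algebra_simps)
  hence "cnj (w n) * Nop w n
      = (cnj (w n) * w n) * complex_of_real (Nop_diag w n) + cnj (w n) * cnj (w (-n)) * bracket w w"
    by (simp only: distrib_left mult.assoc)
  thus ?thesis by (simp only: cnj_mult_self complex_cnj_mult of_real_mult)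
qed

lemma Re_cnj_rhs_GL1:
  "Re (cnj (w n) * rhs_GL1 \<gamma> \<beta> \<omega> w n) = coeff_sq w n * (Re \<beta> - of_int (n\<^sup>2))
     - Re ((1 + \<i> * complex_of_real \<omega>) * (cnj (w n) * Nop w n))"
proof -
  define A where "A = - (1 + \<i> * complex_of_real \<gamma>) * of_int (n\<^sup>2) + \<beta>"
  have "cnj (w n) * rhs_GL1 \<gamma> \<beta> \<omega> w n
      = cnj (w n) * (w n * A) - (1 + \<i> * complex_of_real \<omega>) * (cnj (w n) * Nop w n)"
    unfolding rhs_GL1_def A_def by (simp add: algebra_simps)
  hence "Re (cnj (w n) * rhs_GL1 \<gamma> \<beta> \<omega> w n)
      = coeff_sq w n * Re A - Re ((1 + \<i> * complex_of_real \<omega>) * (cnj (w n) * Nop w n))"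
    by (simp only: minus_complex.sel Re_cnj_mult_mult)
  moreover have "Re A = Re \<beta> - of_int (n\<^sup>2)" unfolding A_def by simp
  ultimately show ?thesis by simp
qed

lemma Re_cnj_rhs_GL1_le:
  assumes w: "inH w" and n: "n \<noteq> 0"
  shows "Re (cnj (w n) * rhs_GL1 \<gamma> \<beta> \<omega> w n) \<le> (Re \<beta> - of_int (n\<^sup>2)) * coeff_sq w n
           + (1 + \<bar>\<omega>\<bar>) * (cmod (w n * w (-n)) * cmod (bracket w w))"
proof -
  define z where "z = cnj (w n * w (-n)) * bracket w w"
  have "Nop_diag w n = 2 * Hnorm2 w - coeff_sq w n - 2 * coeff_sq w (-n)"
    using n by (simp add: Nop_diag_def)
  hence "Nop_diag w n \<ge> 0"
    using coeff_sq_pair_le_Hnorm2[OF w n] zero_le_power2[of "cmod (w n)"] by linarith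
  hence "Re ((1 + \<i> * complex_of_real \<omega>) * (cnj (w n) * Nop w n))
      \<ge> Re ((1 + \<i> * complex_of_real \<omega>) * z)"
    unfolding cnj_mult_Nop z_def by (simp add: algebra_simps)
  moreover have "cmod z = cmod (w n * w (-n)) * cmod (bracket w w)"
    unfolding z_def by (simp add: norm_mult)
  ultimately show ?thesis
    unfolding Re_cnj_rhs_GL1 using abs_Re_one_plus_i_mult_le[of \<omega> z] by (simp add: algebra_simps)
qed

section \<open>Dissipation by the nonlinearity \<open>N\<close> on symmetric truncations\<close>

lemma sum_sq_plus_reflect_le:
  fixes x :: "int \<Rightarrow> real"
  assumes nonneg: "\<And>n. x n \<ge> 0" and G: "finite G" "neg_closed G" "0 \<notin> G"
  shows "(\<Sum>n\<in>G. (x n)\<^sup>2 + 2 * x n * x (-n)) \<le> 3/2 * (sum x G)\<^sup>2"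
proof -
  define P where "P = sum x G"
  have pair: "x n + x (-n) \<le> P" if "n \<in> G" for n
  proof -
    have "n \<noteq> -n" "{n, -n} \<subseteq> G" using that G(2,3) unfolding neg_closed_def by auto
    hence "sum x {n, -n} \<le> P" unfolding P_def using G(1) nonneg by (intro sum_mono2) auto
    thus ?thesis using \<open>n \<noteq> -n\<close> by simp
  qed
  have "(\<Sum>n\<in>G. x n * x (-n)) \<le> (\<Sum>n\<in>G. x n * (P - x n))"
    using pair nonneg by (intro sum_mono mult_left_mono) (auto simp: algebra_simps)
  also have "\<dots> = P * P - (\<Sum>n\<in>G. (x n)\<^sup>2)"
    by (simp add: algebra_simps sum_subtractf sum_distrib_left power2_eq_square P_def)
  finally have le1: "(\<Sum>n\<in>G. x n * x (-n)) \<le> P * P - (\<Sum>n\<in>G. (x n)\<^sup>2)" .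
  have "(\<Sum>n\<in>G. x n * x (-n)) \<le> (\<Sum>n\<in>G. (1/2) * ((x n)\<^sup>2 + (x (-n))\<^sup>2))"
  proof (rule sum_mono)
    show "x n * x (-n) \<le> (1/2) * ((x n)\<^sup>2 + (x (-n))\<^sup>2)" for n
      using sum_squares_bound[of "x n" "x (-n)"] by simp
  qed
  also have "\<dots> = (1/2) * ((\<Sum>n\<in>G. (x n)\<^sup>2) + (\<Sum>n\<in>G. (x (-n))\<^sup>2))"
    by (simp only: sum.distrib sum_distrib_left[symmetric])
  finally have le2: "(\<Sum>n\<in>G. x n * x (-n)) \<le> (\<Sum>n\<in>G. (x n)\<^sup>2)"
    using sum_reflect[OF G(2), of "\<lambda>n. (x n)\<^sup>2"] by simp
  have "(\<Sum>n\<in>G. (x n)\<^sup>2 + 2 * x n * x (-n)) = (\<Sum>n\<in>G. (x n)\<^sup>2) + 2 * (\<Sum>n\<in>G. x n * x (-n))"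
    by (simp add: sum.distrib sum_distrib_left mult.assoc)
  also have "\<dots> \<le> 3/2 * (P * P)" using le1 le2 by linarith
  finally show ?thesis by (simp add: P_def power2_eq_square)
qed

lemma norm_sum_reflect_products_le:
  assumes "neg_closed G"
  shows "cmod (\<Sum>n\<in>G. w n * w (-n)) \<le> sum (coeff_sq w) G"
proof -
  have "cmod (\<Sum>n\<in>G. w n * w (-n)) \<le> (\<Sum>n\<in>G. (1/2) * (coeff_sq w n + coeff_sq w (-n)))"
    by (intro order.trans[OF norm_sum] sum_mono norm_mult_reflect_le)
  also have "\<dots> = (1/2) * (sum (coeff_sq w) G + (\<Sum>n\<in>G. coeff_sq w (-n)))"
    by (simp only: sum.distrib sum_distrib_left[symmetric])
  finally show ?thesis using sum_reflect[OF assms, of "coeff_sq w"] by simp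
qed

lemma norm_sum_reflect_products_ge:
  assumes F: "finite F" "neg_closed F" "0 \<in> F"
  shows "coeff_sq w 0 - sum (coeff_sq w) (F - {0}) \<le> cmod (\<Sum>n\<in>F. w n * w (-n))"
proof -
  let ?rest = "\<Sum>n\<in>F - {0}. w n * w (-n)"
  have "(\<Sum>n\<in>F. w n * w (-n)) = w 0 * w 0 + ?rest"
    using F by (simp add: sum.remove)
  moreover have "cmod ?rest \<le> sum (coeff_sq w) (F - {0})"
    using F(2) by (intro norm_sum_reflect_products_le) (auto simp: neg_closed_def)
  moreover have "cmod (w 0 * w 0) = coeff_sq w 0" by (simp add: norm_mult power2_eq_square)
  ultimately show ?thesis using norm_diff_ineq[of "w 0 * w 0" ?rest] by simp
qed

lemma sum_cnj_mult_Nop: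
  "(\<Sum>n\<in>F. cnj (w n) * Nop w n) = complex_of_real (\<Sum>n\<in>F. coeff_sq w n * Nop_diag w n)
     + cnj (\<Sum>n\<in>F. w n * w (-n)) * bracket w w"
  by (simp add: cnj_mult_Nop sum.distrib sum_distrib_right)

lemma sum_Nop_diag_ge:
  assumes w: "inH w" and F: "finite F" "neg_closed F" "0 \<in> F"
  shows "4 * coeff_sq w 0 * sum (coeff_sq w) (F - {0}) + (sum (coeff_sq w) (F - {0}))\<^sup>2 / 2
    \<le> (\<Sum>n\<in>F. coeff_sq w n * Nop_diag w n)"
proof -
  define G where "G = F - {0}"
  define x0 where "x0 = coeff_sq w 0"
  define P where "P = sum (coeff_sq w) G"
  define S where "S = Hnorm2 w"
  have G: "finite G" "neg_closed G" "0 \<notin> G" and FG: "F = insert 0 G"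
    using F unfolding G_def neg_closed_def by auto
  have "x0 + P \<le> S"
    using sum_coeff_sq_le_Hnorm2[OF w F(1)] G unfolding FG x0_def P_def S_def by simp
  moreover have "x0 \<ge> 0" "P \<ge> 0" unfolding x0_def P_def by (auto intro: sum_nonneg)
  ultimately have "x0 * P \<le> x0 * (S - x0)" "(x0 + P) * P \<le> S * P"
    by (auto intro: mult_left_mono mult_right_mono)
  hence "4 * x0 * P + P\<^sup>2 / 2 \<le> 2 * x0 * (S - x0) + (2 * S * P - 3/2 * P\<^sup>2)"
    by (simp add: power2_eq_square algebra_simps)
  also have "2 * S * P - 3/2 * P\<^sup>2 \<le> 2 * S * P
      - (\<Sum>n\<in>G. (coeff_sq w n)\<^sup>2 + 2 * coeff_sq w n * coeff_sq w (-n))"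
    using sum_sq_plus_reflect_le[OF _ G, of "coeff_sq w"] unfolding P_def by simp
  also have "\<dots> = (\<Sum>n\<in>G. 2 * S * coeff_sq w n
      - ((coeff_sq w n)\<^sup>2 + 2 * coeff_sq w n * coeff_sq w (-n)))"
    unfolding P_def by (simp add: sum_subtractf sum_distrib_left)
  also have "\<dots> = (\<Sum>n\<in>G. coeff_sq w n * Nop_diag w n)"
    using G(3) unfolding S_def Nop_diag_def
    by (intro sum.cong) (auto simp: power2_eq_square algebra_simps)
  finally show ?thesis
    using G unfolding FG x0_def P_def S_def G_def[symmetric] by (simp add: Nop_diag_def algebra_simps)
qed

lemma half_sq_le_of_bounds:
  fixes a p B D :: real
  assumes "a \<ge> 0" "p \<ge> 0" "B \<ge> 0" "a - p \<le> B" "4 * a * p + p\<^sup>2 / 2 \<le> D"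
  shows "(a + p)\<^sup>2 / 2 \<le> D + B\<^sup>2"
proof -
  have ap: "a * p \<ge> 0" "a * a \<ge> 0" "p * p \<ge> 0" using assms(1,2) by auto
  have D: "4 * (a * p) + p * p / 2 \<le> D" using assms(5) by (simp add: power2_eq_square mult.assoc)
  show ?thesis
  proof (cases "a \<le> p")
    case True
    hence "a * a \<le> a * p" using assms(1) by (intro mult_left_mono)
    moreover have "(a + p)\<^sup>2 / 2 = a * a / 2 + a * p + p * p / 2"
      by (simp add: power2_eq_square field_simps)
    ultimately show ?thesis using D ap zero_le_power2[of B] by linarith
  next
    case False
    hence "(a - p)\<^sup>2 \<le> B\<^sup>2" using assms(4) by (intro power_mono) auto
    moreover have "(a + p)\<^sup>2 / 2 = (a - p)\<^sup>2 + 3 * (a * p) - a * a / 2 - p * p / 2"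
      by (simp add: power2_eq_square field_simps)
    ultimately show ?thesis using D ap by linarith
  qed
qed

lemma Re_sum_cnj_mult_Nop_ge:
  assumes w: "inH w" and F: "finite F" "neg_closed F" "0 \<in> F"
  shows "(sum (coeff_sq w) F)\<^sup>2 / 2
      - (1 + \<bar>\<omega>\<bar>) * Hnorm2 w * cmod (bracket w w - (\<Sum>n\<in>F. w n * w (-n)))
    \<le> Re ((1 + \<i> * complex_of_real \<omega>) * (\<Sum>n\<in>F. cnj (w n) * Nop w n))"
proof -
  define bF where "bF = (\<Sum>n\<in>F. w n * w (-n))"
  define D where "D = (\<Sum>n\<in>F. coeff_sq w n * Nop_diag w n)"
  define e where "e = bracket w w - bF"
  define x0 where "x0 = coeff_sq w 0"
  define P where "P = sum (coeff_sq w) (F - {0})"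
  have sumF: "sum (coeff_sq w) F = x0 + P"
    using F unfolding x0_def P_def by (simp add: sum.remove)
  have "cmod bF \<ge> x0 - P"
    unfolding bF_def x0_def P_def by (rule norm_sum_reflect_products_ge[OF F])
  hence "(x0 + P)\<^sup>2 / 2 \<le> D + (cmod bF)\<^sup>2"
    using sum_Nop_diag_ge[OF w F] unfolding x0_def P_def D_def
    by (intro half_sq_le_of_bounds) (auto intro: sum_nonneg)
  moreover have "cmod bF \<le> Hnorm2 w"
    using norm_sum_reflect_products_le[OF F(2), where w = w] sum_coeff_sq_le_Hnorm2[OF w F(1)]
    unfolding bF_def
    by linarith
  hence "(1 + \<bar>\<omega>\<bar>) * (cmod bF * cmod e) \<le> (1 + \<bar>\<omega>\<bar>) * (Hnorm2 w * cmod e)"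
    by (intro mult_left_mono mult_right_mono) auto
  moreover have "Re ((1 + \<i> * complex_of_real \<omega>) * (cnj bF * e))
      \<ge> - ((1 + \<bar>\<omega>\<bar>) * (cmod bF * cmod e))"
    using abs_Re_one_plus_i_mult_le[of \<omega> "cnj bF * e"] by (simp add: norm_mult)
  moreover have "(\<Sum>n\<in>F. cnj (w n) * Nop w n)
      = complex_of_real (D + (cmod bF)\<^sup>2) + cnj bF * e"
    unfolding sum_cnj_mult_Nop D_def bF_def[symmetric] e_def
    by (simp add: cnj_mult_self algebra_simps) (metis complex_norm_square of_real_power)
  hence "Re ((1 + \<i> * complex_of_real \<omega>) * (\<Sum>n\<in>F. cnj (w n) * Nop w n))
      = D + (cmod bF)\<^sup>2 + Re ((1 + \<i> * complex_of_real \<omega>) * (cnj bF * e))"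
    by (simp add: distrib_left)
  ultimately show ?thesis unfolding sumF e_def bF_def[symmetric] by linarith
qed

lemma sum_Re_cnj_rhs_GL1_le:
  assumes w: "inH w" and F: "finite F" "neg_closed F" "0 \<in> F"
  shows "(\<Sum>n\<in>F. Re (cnj (w n) * rhs_GL1 \<gamma> \<beta> \<omega> w n))
    \<le> Re \<beta> * sum (coeff_sq w) F - (sum (coeff_sq w) F)\<^sup>2 / 2
      + (1 + \<bar>\<omega>\<bar>) * Hnorm2 w * (Hnorm2 w - sum (coeff_sq w) F)"
proof -
  have "(\<Sum>n\<in>F. Re (cnj (w n) * rhs_GL1 \<gamma> \<beta> \<omega> w n))
      = (\<Sum>n\<in>F. coeff_sq w n * (Re \<beta> - of_int (n\<^sup>2)))
        - Re ((1 + \<i> * complex_of_real \<omega>) * (\<Sum>n\<in>F. cnj (w n) * Nop w n))"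
    by (simp only: Re_cnj_rhs_GL1 sum_subtractf sum_distrib_left Re_sum)
  moreover have "(\<Sum>n\<in>F. coeff_sq w n * (Re \<beta> - of_int (n\<^sup>2))) \<le> Re \<beta> * sum (coeff_sq w) F"
    unfolding sum_distrib_left by (intro sum_mono) (simp add: algebra_simps)
  moreover have "(1 + \<bar>\<omega>\<bar>) * Hnorm2 w * cmod (bracket w w - (\<Sum>n\<in>F. w n * w (-n)))
      \<le> (1 + \<bar>\<omega>\<bar>) * Hnorm2 w * (Hnorm2 w - sum (coeff_sq w) F)"
    using norm_bracket_minus_sum_le[OF w F(1,2)] Hnorm2_nonneg[of w]
    by (intro mult_left_mono) auto
  ultimately show ?thesis using Re_sum_cnj_mult_Nop_ge[OF w F, of \<omega>] by linarith
qed

lemma GL2_coeff_sq_le_exp: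
  assumes sol: "is_solution (rhs_GL2 \<beta> \<omega>) u" and t: "0 \<le> t0" "t0 \<le> t1"
  shows "coeff_sq (u t1) n \<le> exp (2 * (Re \<beta> - of_int (n\<^sup>2)) * (t1 - t0)) * coeff_sq (u t0) n"
proof (rule gronwall_exp[OF t(2)])
  show "continuous_on {t0..t1} (\<lambda>s. coeff_sq (u s) n)"
    using t by (intro continuous_on_subset[OF continuous_on_solution_coeff_sq[OF sol]]) auto
  fix s assume s: "t0 < s" "s < t1"
  show "((\<lambda>s. coeff_sq (u s) n) has_real_derivative
      2 * Re (cnj (u s n) * rhs_GL2 \<beta> \<omega> (u s) n)) (at s)"
    using s t by (intro has_real_derivative_coeff_sq[OF sol]) auto
  have "Re (cnj (u s n) * rhs_GL2 \<beta> \<omega> (u s) n) \<le> (Re \<beta> - of_int (n\<^sup>2)) * coeff_sq (u s) n"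
    using s t by (intro Re_cnj_rhs_GL2_le solution_inH[OF sol]) auto
  hence "2 * Re (cnj (u s n) * rhs_GL2 \<beta> \<omega> (u s) n)
      \<le> 2 * ((Re \<beta> - of_int (n\<^sup>2)) * coeff_sq (u s) n)"
    by (rule mult_left_mono) simp
  thus "2 * Re (cnj (u s n) * rhs_GL2 \<beta> \<omega> (u s) n) \<le> 2 * (Re \<beta> - of_int (n\<^sup>2)) * coeff_sq (u s) n"
    by (simp only: mult.assoc)
qed

lemma GL1_coeff_sq_pair_le_exp:
  assumes sol: "is_solution (rhs_GL1 \<gamma> \<beta> \<omega>) u" and n: "n \<noteq> 0" and t: "0 \<le> t0" "t0 \<le> t1"
    and M: "\<And>s. s \<in> {t0..t1} \<Longrightarrow> Hnorm2 (u s) \<le> M"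
  shows "coeff_sq (u t1) n + coeff_sq (u t1) (-n) \<le>
      exp (2 * (Re \<beta> - of_int (n\<^sup>2) + (1 + \<bar>\<omega>\<bar>) * M) * (t1 - t0))
        * (coeff_sq (u t0) n + coeff_sq (u t0) (-n))"
proof (rule gronwall_exp[OF t(2)])
  show "continuous_on {t0..t1} (\<lambda>s. coeff_sq (u s) n + coeff_sq (u s) (-n))"
    using t by (intro continuous_on_add continuous_on_subset[OF continuous_on_solution_coeff_sq[OF sol]])
      auto
  fix s assume s: "t0 < s" "s < t1"
  show "((\<lambda>s. coeff_sq (u s) n + coeff_sq (u s) (-n)) has_real_derivative
      2 * Re (cnj (u s n) * rhs_GL1 \<gamma> \<beta> \<omega> (u s) n)
        + 2 * Re (cnj (u s (-n)) * rhs_GL1 \<gamma> \<beta> \<omega> (u s) (-n))) (at s)"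
    using s t by (intro DERIV_add has_real_derivative_coeff_sq[OF sol]) auto
  define w where "w = u s"
  define p where "p = cmod (w n * w (-n))"
  have w: "inH w" using solution_inH[OF sol] s t unfolding w_def by auto
  have "2 * p * cmod (bracket w w) \<le> (coeff_sq w n + coeff_sq w (-n)) * M"
    using norm_mult_reflect_le[of w n] norm_bracket_le_Hnorm2[OF w] M[of s] s
    unfolding p_def w_def by (intro mult_mono) auto
  hence "(1 + \<bar>\<omega>\<bar>) * (2 * p * cmod (bracket w w))
      \<le> (1 + \<bar>\<omega>\<bar>) * ((coeff_sq w n + coeff_sq w (-n)) * M)"
    by (intro mult_left_mono) auto
  moreover have "p = cmod (w (-n) * w (- (-n)))" unfolding p_def by (simp add: mult.commute)
  ultimately show "2 * Re (cnj (u s n) * rhs_GL1 \<gamma> \<beta> \<omega> (u s) n)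
      + 2 * Re (cnj (u s (-n)) * rhs_GL1 \<gamma> \<beta> \<omega> (u s) (-n))
      \<le> 2 * (Re \<beta> - of_int (n\<^sup>2) + (1 + \<bar>\<omega>\<bar>) * M) * (coeff_sq (u s) n + coeff_sq (u s) (-n))"
    using Re_cnj_rhs_GL1_le[OF w n, of \<gamma> \<beta> \<omega>] Re_cnj_rhs_GL1_le[OF w, of "-n" \<gamma> \<beta> \<omega>] n
    unfolding w_def[symmetric] p_def[symmetric] by (simp add: algebra_simps)
qed

lemma GL2_invariant_H_D:
  assumes sol: "is_solution (rhs_GL2 \<beta> \<omega>) u" and u0: "u 0 \<in> H_D D" and t: "t \<ge> 0"
  shows "u t \<in> H_D D"
proof -
  have "u t n = 0" if "\<bar>n\<bar> > int D" for n
    using GL2_coeff_sq_le_exp[OF sol order_refl t, of n] u0 that unfolding H_D_def by simp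
  thus ?thesis unfolding H_D_def using solution_inH[OF sol t] by auto
qed

lemma GL1_invariant_H_D:
  assumes sol: "is_solution (rhs_GL1 \<gamma> \<beta> \<omega>) u" and u0: "u 0 \<in> H_D D" and t: "t \<ge> 0"
  shows "u t \<in> H_D D"
proof -
  obtain M where M: "M \<ge> 0" "\<And>s. s \<in> {0..t} \<Longrightarrow> Hnorm2 (u s) \<le> M"
    using solution_Hnorm2_bounded[OF sol] by blast
  have "u t n = 0" if n: "\<bar>n\<bar> > int D" for n
  proof -
    have "u 0 n = 0" "u 0 (-n) = 0" using u0 n unfolding H_D_def by auto
    hence "coeff_sq (u t) n + coeff_sq (u t) (-n) \<le> 0"
      using GL1_coeff_sq_pair_le_exp[OF sol _ order_refl t, where M = M and n = n] M n by auto
    hence "coeff_sq (u t) n \<le> 0" using zero_le_power2[of "cmod (u t (-n))"] by linarith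
    thus ?thesis by simp
  qed
  thus ?thesis unfolding H_D_def using solution_inH[OF sol t] by auto
qed

lemma global_attractor_Hcompact: "is_global_attractor F A \<Longrightarrow> Hcompact A"
  unfolding is_global_attractor_def by (elim conjE)

lemma global_attractor_inH: "is_global_attractor F A \<Longrightarrow> w \<in> A \<Longrightarrow> inH w"
  using Hcompact_inH global_attractor_Hcompact by blast

lemma global_attractor_eq:
  assumes "is_global_attractor F A" "t \<ge> 0"
  shows "A = {u t | u. is_solution F u \<and> u 0 \<in> A}"
proof -
  have "\<forall>t\<ge>0. A = {u t | u. is_solution F u \<and> u 0 \<in> A}"
    using assms(1) unfolding is_global_attractor_def by (elim conjE)
  thus ?thesis using assms(2) by (elim allE impE)
qed

lemma global_attractor_forward:
  assumes "is_global_attractor F A" "is_solution F u" "u 0 \<in> A" "t \<ge> 0"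
  shows "u t \<in> A"
proof -
  have "u t \<in> {u t | u. is_solution F u \<and> u 0 \<in> A}" using assms(2,3) by blast
  thus ?thesis using global_attractor_eq[OF assms(1,4)] by simp
qed

lemma global_attractor_backward:
  assumes "is_global_attractor F A" "w \<in> A" "t \<ge> 0"
  obtains u where "is_solution F u" "u 0 \<in> A" "u t = w"
proof -
  have "w \<in> {u t | u. is_solution F u \<and> u 0 \<in> A}"
    using assms(2) global_attractor_eq[OF assms(1,3)] by simp
  thus thesis using that by blast
qed

section \<open>Absorbing bound for the first equation\<close>

lemma GL1_truncated_energy_absorbed:
  assumes sol: "is_solution (rhs_GL1 \<gamma> \<beta> \<omega>) u"
    and R: "\<And>\<tau>. \<tau> \<ge> 0 \<Longrightarrow> Hnorm2 (u \<tau>) \<le> R"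
    and tail: "\<And>\<tau>. \<tau> \<ge> 0 \<Longrightarrow>
      (1 + \<bar>\<omega>\<bar>) * R * (Hnorm2 (u \<tau>) - sum (coeff_sq (u \<tau>)) (modes m)) \<le> 1/2"
    and s: "s \<ge> R"
  shows "sum (coeff_sq (u s)) (modes m) \<le> 2 * \<bar>Re \<beta>\<bar> + 2"
proof -
  define L where "L = 2 * \<bar>Re \<beta>\<bar> + 2"
  define f where "f \<tau> = sum (coeff_sq (u \<tau>)) (modes m)" for \<tau>
  have "R \<ge> 0" using R[of 0] Hnorm2_nonneg[of "u 0"] by simp
  have "f s \<le> max L (f 0 - s)"
  proof (rule descent_to_level)
    show "continuous_on {0..} f"
      unfolding f_def by (intro continuous_on_sum continuous_on_solution_coeff_sq[OF sol])
    fix \<tau> :: real assume \<tau>: "0 < \<tau>"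
    show "(f has_real_derivative
        (\<Sum>n\<in>modes m. 2 * Re (cnj (u \<tau> n) * rhs_GL1 \<gamma> \<beta> \<omega> (u \<tau>) n))) (at \<tau>)"
      unfolding f_def by (intro DERIV_sum has_real_derivative_coeff_sq[OF sol \<tau>])
    assume fL: "f \<tau> \<ge> L"
    define w where "w = u \<tau>"
    have w: "inH w" using solution_inH[OF sol] \<tau> unfolding w_def by simp
    have "(1 + \<bar>\<omega>\<bar>) * Hnorm2 w * (Hnorm2 w - f \<tau>)
        \<le> (1 + \<bar>\<omega>\<bar>) * R * (Hnorm2 w - f \<tau>)"
      using R[of \<tau>] \<tau> tail_nonneg[OF w, of m] unfolding w_def f_def
      by (intro mult_right_mono mult_left_mono) auto
    also have "\<dots> \<le> 1/2" using tail[of \<tau>] \<tau> unfolding w_def f_def by simp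
    finally have "(\<Sum>n\<in>modes m. Re (cnj (w n) * rhs_GL1 \<gamma> \<beta> \<omega> w n))
        \<le> Re \<beta> * f \<tau> - (f \<tau>)\<^sup>2 / 2 + 1/2"
      using sum_Re_cnj_rhs_GL1_le[OF w modes_props[of m], of \<gamma> \<beta> \<omega>] unfolding f_def w_def by linarith
    moreover have "Re \<beta> * f \<tau> \<le> \<bar>Re \<beta>\<bar> * f \<tau>" "L * f \<tau> \<le> f \<tau> * f \<tau>"
      using fL unfolding L_def by (auto intro: mult_right_mono)
    ultimately show "(\<Sum>n\<in>modes m. 2 * Re (cnj (u \<tau> n) * rhs_GL1 \<gamma> \<beta> \<omega> (u \<tau>) n)) \<le> -1"
      using fL unfolding w_def sum_distrib_left[symmetric] L_def
      by (simp add: power2_eq_square algebra_simps)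
  qed (use s \<open>R \<ge> 0\<close> in simp)
  moreover have "f 0 \<le> Hnorm2 (u 0)"
    unfolding f_def by (rule sum_coeff_sq_le_Hnorm2[OF solution_inH[OF sol] modes_props(1)]) simp
  moreover note R[of 0]
  ultimately show ?thesis using s unfolding f_def L_def by simp
qed

lemma GL1_attractor_Hnorm2_le:
  assumes attr: "is_global_attractor (rhs_GL1 \<gamma> \<beta> \<omega>) A"
    and R: "R \<ge> 0" "\<And>v. v \<in> A \<Longrightarrow> Hnorm2 v \<le> R"
    and sol: "is_solution (rhs_GL1 \<gamma> \<beta> \<omega>) u" and u0: "u 0 \<in> A" and s: "s \<ge> R"
  shows "Hnorm2 (u s) \<le> 2 * \<bar>Re \<beta>\<bar> + 2"
proof (rule Hnorm2_le_finite_sums[OF solution_inH[OF sol]])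
  show "s \<ge> 0" using s R(1) by simp
  define K where "K = 1 + \<bar>\<omega>\<bar>"
  define \<delta> where "\<delta> = 1 / (2 * K * (R + 1))"
  have "\<delta> > 0" unfolding \<delta>_def K_def using R(1) by simp
  then obtain m where m: "\<And>v. v \<in> A \<Longrightarrow> Hnorm2 v - sum (coeff_sq v) (modes m) \<le> \<delta>"
    using Hcompact_uniform_tail[OF global_attractor_Hcompact[OF attr]] by blast
  fix G :: "int set" assume "finite G"
  then obtain m' where m': "G \<subseteq> modes m'" using finite_subset_modes by blast
  have uA: "u \<tau> \<in> A" if "\<tau> \<ge> 0" for \<tau> using global_attractor_forward[OF attr sol u0 that] .
  have "sum (coeff_sq (u s)) (modes (max m m')) \<le> 2 * \<bar>Re \<beta>\<bar> + 2"
  proof (rule GL1_truncated_energy_absorbed[OF sol _ _ s])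
    show "Hnorm2 (u \<tau>) \<le> R" if "\<tau> \<ge> 0" for \<tau> using R(2)[OF uA[OF that]] .
    fix \<tau> :: real assume "\<tau> \<ge> 0"
    hence "Hnorm2 (u \<tau>) - sum (coeff_sq (u \<tau>)) (modes (max m m')) \<le> \<delta>"
      using m[OF uA] tail_antimono[OF global_attractor_inH[OF attr uA], of \<tau> m "max m m'"]
      by fastforce
    hence "K * R * (Hnorm2 (u \<tau>) - sum (coeff_sq (u \<tau>)) (modes (max m m'))) \<le> K * R * \<delta>"
      using R(1) by (intro mult_left_mono) (auto simp: K_def)
    also have "K * R * \<delta> \<le> 1/2"
    proof -
      have "K \<noteq> 0" unfolding K_def by simp
      have "K * R * \<delta> = (K * R) / (K * (2 * (R + 1)))" unfolding \<delta>_def by (simp add: mult.assoc)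
      also have "\<dots> = R / (2 * (R + 1))" using \<open>K \<noteq> 0\<close> by (rule mult_divide_mult_cancel_left)
      also have "\<dots> \<le> 1/2" using R(1) by (simp add: field_simps)
      finally show ?thesis .
    qed
    finally show "(1 + \<bar>\<omega>\<bar>) * R * (Hnorm2 (u \<tau>) - sum (coeff_sq (u \<tau>)) (modes (max m m'))) \<le> 1/2"
      unfolding K_def .
  qed
  moreover have "sum (coeff_sq (u s)) G \<le> sum (coeff_sq (u s)) (modes (max m m'))"
    using m' modes_mono[of m' "max m m'"] modes_props(1) by (intro sum_mono2) auto
  ultimately show "sum (coeff_sq (u s)) G \<le> 2 * \<bar>Re \<beta>\<bar> + 2" by linarith
qed

section \<open>High modes vanish on the attractors\<close>

lemma GL1_attractor_coeff_eq_0: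
  assumes attr: "is_global_attractor (rhs_GL1 \<gamma> \<beta> \<omega>) A" and wA: "w \<in> A"
    and n: "of_int \<bar>n\<bar> \<ge> \<bar>Re \<beta>\<bar> + (1 + \<bar>\<omega>\<bar>) * (2 * \<bar>Re \<beta>\<bar> + 2) + 1"
  shows "w n = 0"
proof -
  obtain R where R: "R \<ge> 0" "\<And>v. v \<in> A \<Longrightarrow> Hnorm2 v \<le> R"
    using Hcompact_bounded[OF global_attractor_Hcompact[OF attr]] by blast
  define L where "L = 2 * \<bar>Re \<beta>\<bar> + 2"
  define c where "c = Re \<beta> - of_int (n\<^sup>2) + (1 + \<bar>\<omega>\<bar>) * L"
  have "(1 + \<bar>\<omega>\<bar>) * L \<ge> 0" unfolding L_def by simp
  hence n1: "of_int \<bar>n\<bar> \<ge> (1::real)" using n unfolding L_def by linarith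
  hence "real_of_int (n\<^sup>2) \<ge> of_int \<bar>n\<bar>"
    using mult_left_mono[OF n1, of "of_int \<bar>n\<bar>"] by (simp add: power2_eq_square abs_mult_self_eq)
  hence c: "c \<le> -1" using n unfolding c_def L_def by linarith
  have n0: "n \<noteq> 0" using n1 by auto
  have "coeff_sq w n \<le> exp (- 2 * \<tau>) * R" if \<tau>: "\<tau> \<ge> 0" for \<tau>
  proof -
    obtain u where u: "is_solution (rhs_GL1 \<gamma> \<beta> \<omega>) u" "u 0 \<in> A" "u (R + \<tau>) = w"
      using global_attractor_backward[OF attr wA, of "R + \<tau>"] R(1) \<tau> by auto
    have uR: "u R \<in> A" using global_attractor_forward[OF attr u(1,2) R(1)] .
    have "coeff_sq w n + coeff_sq w (-n)
        \<le> exp (2 * c * \<tau>) * (coeff_sq (u R) n + coeff_sq (u R) (-n))"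
      using GL1_coeff_sq_pair_le_exp[OF u(1) n0 R(1), of "R + \<tau>" L] \<tau> u(3)
        GL1_attractor_Hnorm2_le[OF attr R u(1,2)]
      unfolding c_def L_def by auto
    also have "\<dots> \<le> exp (- 2 * \<tau>) * R"
      using mult_right_mono[OF c \<tau>] R(2)[OF uR]
        coeff_sq_pair_le_Hnorm2[OF global_attractor_inH[OF attr uR] n0]
      by (intro mult_mono) (auto simp: mult.commute)
    finally show ?thesis using zero_le_power2[of "cmod (w (-n))"] by linarith
  qed
  hence "coeff_sq w n = 0" by (intro nonneg_le_exp_decay_imp_zero[of _ 2 R]) auto
  thus ?thesis by simp
qed

lemma GL2_attractor_coeff_eq_0:
  assumes attr: "is_global_attractor (rhs_GL2 \<beta> \<omega>) A" and wA: "w \<in> A"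
    and n: "of_int (n\<^sup>2) > Re \<beta>"
  shows "w n = 0"
proof -
  obtain R where R: "R \<ge> 0" "\<And>v. v \<in> A \<Longrightarrow> Hnorm2 v \<le> R"
    using Hcompact_bounded[OF global_attractor_Hcompact[OF attr]] by blast
  define c where "c = 2 * (of_int (n\<^sup>2) - Re \<beta>)"
  have "coeff_sq w n \<le> exp (- c * \<tau>) * R" if \<tau>: "\<tau> \<ge> 0" for \<tau>
  proof -
    obtain u where u: "is_solution (rhs_GL2 \<beta> \<omega>) u" "u 0 \<in> A" "u \<tau> = w"
      using global_attractor_backward[OF attr wA \<tau>] by auto
    have "coeff_sq w n \<le> exp (- c * \<tau>) * coeff_sq (u 0) n"
      using GL2_coeff_sq_le_exp[OF u(1) order_refl \<tau>, of n] u(3) unfolding c_def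
      by (simp add: algebra_simps)
    also have "\<dots> \<le> exp (- c * \<tau>) * R"
      using coeff_sq_le_Hnorm2[OF global_attractor_inH[OF attr u(2)], of n] R(2)[OF u(2)]
      by (intro mult_left_mono) auto
    finally show ?thesis .
  qed
  moreover have "c > 0" unfolding c_def using n by simp
  ultimately have "coeff_sq w n = 0" by (intro nonneg_le_exp_decay_imp_zero[of _ c R]) auto
  thus ?thesis by simp
qed

lemma H_D_mono: "D \<le> D' \<Longrightarrow> H_D D \<subseteq> H_D D'"
  unfolding H_D_def by auto

lemma GL1_attractor_subset_H_D:
  assumes attr: "is_global_attractor (rhs_GL1 \<gamma> \<beta> \<omega>) A"
    and D: "real D \<ge> \<bar>Re \<beta>\<bar> + (1 + \<bar>\<omega>\<bar>) * (2 * \<bar>Re \<beta>\<bar> + 2) + 1"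
  shows "A \<subseteq> H_D D"
  using GL1_attractor_coeff_eq_0[OF attr] global_attractor_inH[OF attr] D
  unfolding H_D_def by (force simp: not_le)

lemma GL2_attractor_subset_H_D:
  assumes attr: "is_global_attractor (rhs_GL2 \<beta> \<omega>) A"
  shows "A \<subseteq> H_D (nat \<lfloor>sqrt (Re \<beta>)\<rfloor> + 1)"
proof
  fix w assume wA: "w \<in> A"
  have "w n = 0" if n: "\<bar>n\<bar> > int (nat \<lfloor>sqrt (Re \<beta>)\<rfloor> + 1)" for n
  proof (rule GL2_attractor_coeff_eq_0[OF attr wA])
    show "of_int (n\<^sup>2) > Re \<beta>"
    proof (cases "Re \<beta> < 0")
      case True
      have "real_of_int (n\<^sup>2) \<ge> 0" by simp
      thus ?thesis using True by linarith
    next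
      case False
      hence "sqrt (Re \<beta>) < of_int \<bar>n\<bar>" using n by linarith
      hence "(sqrt (Re \<beta>))\<^sup>2 < (of_int \<bar>n\<bar>)\<^sup>2" using False by (intro power_strict_mono) auto
      thus ?thesis using False by simp
    qed
  qed
  thus "w \<in> H_D (nat \<lfloor>sqrt (Re \<beta>)\<rfloor> + 1)"
    unfolding H_D_def using global_attractor_inH[OF attr wA] by auto
qed

lemma zero_is_solution_GL2: "is_solution (rhs_GL2 \<beta> \<omega>) (\<lambda>t n. 0)"
  unfolding is_solution_def rhs_GL2_def Mop_def Hdist_def Hnorm2_def using inH_zero by simp

text \<open>An attractor attracts the bounded set \<open>{0}\<close>, so it cannot be empty.\<close>

lemma GL2_attractor_eq_zero:
  assumes attr: "is_global_attractor (rhs_GL2 \<beta> \<omega>) A" and neg: "Re \<beta> < 0"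
  shows "A = {\<lambda>n. 0}"
proof -
  have "w = (\<lambda>n. 0)" if "w \<in> A" for w
  proof
    fix n
    have "real_of_int (n\<^sup>2) \<ge> 0" by simp
    thus "w n = 0" using neg by (intro GL2_attractor_coeff_eq_0[OF attr that]) linarith
  qed
  moreover have "Hbounded {\<lambda>n. 0}"
    unfolding Hbounded_def using inH_zero Hnorm2_zero by auto
  hence "\<exists>T. \<forall>t\<ge>T. \<forall>u. is_solution (rhs_GL2 \<beta> \<omega>) u \<and> u 0 \<in> {\<lambda>n. 0} \<longrightarrow> (\<exists>a\<in>A. Hdist (u t) a < 1)"
    using attr unfolding is_global_attractor_def by (elim conjE) (meson zero_less_one)
  hence "A \<noteq> {}" using zero_is_solution_GL2 by blast
  ultimately show ?thesis by blast
qed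

lemma attractors_subset_H_D:
  "\<exists>D0::nat. \<forall>D\<ge>D0.
     (\<forall>\<gamma> A. is_global_attractor (rhs_GL1 \<gamma> \<beta> \<omega>) A \<longrightarrow> A \<subseteq> H_D D)
     \<and> (\<forall>A. is_global_attractor (rhs_GL2 \<beta> \<omega>) A \<longrightarrow> A \<subseteq> H_D D)"
proof -
  define c where "c = \<bar>Re \<beta>\<bar> + (1 + \<bar>\<omega>\<bar>) * (2 * \<bar>Re \<beta>\<bar> + 2) + 1"
  define D0 where "D0 = max (nat \<lceil>c\<rceil>) (nat \<lfloor>sqrt (Re \<beta>)\<rfloor> + 1)"
  have "A \<subseteq> H_D D" if "D0 \<le> D" "is_global_attractor (rhs_GL1 \<gamma> \<beta> \<omega>) A" for D \<gamma> A
  proof -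
    have "c \<le> real D" using that(1) real_nat_ceiling_ge[of c] unfolding D0_def by linarith
    thus ?thesis unfolding c_def by (rule GL1_attractor_subset_H_D[OF that(2)])
  qed
  moreover have "A \<subseteq> H_D D" if "D0 \<le> D" "is_global_attractor (rhs_GL2 \<beta> \<omega>) A" for D A
    using GL2_attractor_subset_H_D[OF that(2)] H_D_mono[of "nat \<lfloor>sqrt (Re \<beta>)\<rfloor> + 1" D] that(1)
    unfolding D0_def by simp
  ultimately show ?thesis by blast
qed

theorem proposition4p3:
  shows
   "(\<forall>(\<gamma>::real) (\<beta>::complex) (\<omega>::real) D u.
        is_solution (rhs_GL1 \<gamma> \<beta> \<omega>) u \<and> u 0 \<in> H_D D \<longrightarrow> (\<forall>t\<ge>0. u t \<in> H_D D))
    \<and> (\<forall>(\<beta>::complex) (\<omega>::real) D u.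
        is_solution (rhs_GL2 \<beta> \<omega>) u \<and> u 0 \<in> H_D D \<longrightarrow> (\<forall>t\<ge>0. u t \<in> H_D D))
    \<and> (\<forall>(\<beta>::complex) (\<omega>::real). \<exists>D0::nat. \<forall>D\<ge>D0.
        (\<forall>(\<gamma>::real) A. is_global_attractor (rhs_GL1 \<gamma> \<beta> \<omega>) A \<longrightarrow> A \<subseteq> H_D D)
        \<and> (\<forall>A. is_global_attractor (rhs_GL2 \<beta> \<omega>) A \<longrightarrow> A \<subseteq> H_D D))
    \<and> (\<forall>(\<beta>::complex) (\<omega>::real) A. is_global_attractor (rhs_GL2 \<beta> \<omega>) A \<longrightarrow>
        A \<subseteq> H_D (nat \<lfloor>sqrt (Re \<beta>)\<rfloor> + 1)
        \<and> (Re \<beta> < 0 \<longrightarrow> A = {\<lambda>n. 0}))"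
  by (intro conjI allI impI attractors_subset_H_D GL2_attractor_subset_H_D GL2_attractor_eq_zero)
    (blast intro: GL1_invariant_H_D GL2_invariant_H_D)+

end
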